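(* Let $n\geq 2$ be even, $m>1$, and let $G$ be a non-regular bipartite graph of order $m$ with a bipartition $\{A,B\}$ such that all vertices of $A$ have the same degree and all vertices of $B$ have the same degree. Then $\chi_{ld}(G[\overline{K_{n}}])=2$.
   Context: All graphs are finite, simple and undirected, without isolated vertices. For a graph $G=(V,E)$ of order $N$ without isolated vertices, a bijection $f\colon V\to\{1,2,\dots,N\}$ is a local distance antimagic labeling if $w(u)\neq w(v)$ for every edge $uv$, where $w(u)=\sum_{x\in N(u)}f(x)$ and $N(u)$ is the open neighborhood of $u$. $\chi_{ld}(G)$ is the minimum number of distinct weights over all local distance antimagic labelings of $G$. $\overline{K_n}$ is the edgeless graph on $n$ vertices. The lexicographic product $G[H]$ has vertex set $V(G)\times V(H)$, with $(g,h)$ adjacent to $(g',h')$ iff $gg'\in E(G)$, or $g=g'$ and $hh'\in E(H)$. *)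

theory Defs
  imports Main
begin

definition simple_graph :: "'a set \<Rightarrow> ('a \<times> 'a) set \<Rightarrow> bool" where
  "simple_graph V E \<longleftrightarrow> finite V \<and> E \<subseteq> V \<times> V \<and> sym E \<and> (\<forall>x. (x, x) \<notin> E)"

definition nbhd :: "('a \<times> 'a) set \<Rightarrow> 'a \<Rightarrow> 'a set" where
  "nbhd E v = {u. (v, u) \<in> E}"

definition degree :: "('a \<times> 'a) set \<Rightarrow> 'a \<Rightarrow> nat" where
  "degree E v = card (nbhd E v)"

definition no_isolated :: "'a set \<Rightarrow> ('a \<times> 'a) set \<Rightarrow> bool" where
  "no_isolated V E \<longleftrightarrow> (\<forall>v\<in>V. nbhd E v \<noteq> {})"

definition regular :: "'a set \<Rightarrow> ('a \<times> 'a) set \<Rightarrow> bool" where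
  "regular V E \<longleftrightarrow> (\<forall>u\<in>V. \<forall>v\<in>V. degree E u = degree E v)"

definition bipartition :: "'a set \<Rightarrow> ('a \<times> 'a) set \<Rightarrow> 'a set \<Rightarrow> 'a set \<Rightarrow> bool" where
  "bipartition V E A B \<longleftrightarrow> A \<union> B = V \<and> A \<inter> B = {} \<and>
     (\<forall>(u, v)\<in>E. (u \<in> A \<and> v \<in> B) \<or> (u \<in> B \<and> v \<in> A))"

definition weight :: "('a \<times> 'a) set \<Rightarrow> ('a \<Rightarrow> nat) \<Rightarrow> 'a \<Rightarrow> nat" where
  "weight E f v = (\<Sum>x\<in>nbhd E v. f x)"

definition ld_antimagic :: "'a set \<Rightarrow> ('a \<times> 'a) set \<Rightarrow> ('a \<Rightarrow> nat) \<Rightarrow> bool" where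
  "ld_antimagic V E f \<longleftrightarrow> bij_betw f V {1..card V} \<and>
     (\<forall>(u, v)\<in>E. weight E f u \<noteq> weight E f v)"

definition chi_ld :: "'a set \<Rightarrow> ('a \<times> 'a) set \<Rightarrow> nat" where
  "chi_ld V E = (LEAST k. \<exists>f. ld_antimagic V E f \<and> k = card (weight E f ` V))"

definition lex_vertices :: "'a set \<Rightarrow> 'b set \<Rightarrow> ('a \<times> 'b) set" where
  "lex_vertices V1 V2 = V1 \<times> V2"

definition lex_edges :: "'a set \<Rightarrow> ('a \<times> 'a) set \<Rightarrow> 'b set \<Rightarrow> ('b \<times> 'b) set
    \<Rightarrow> (('a \<times> 'b) \<times> ('a \<times> 'b)) set" where
  "lex_edges V1 E1 V2 E2 = {((g, h), (g', h')). g \<in> V1 \<and> g' \<in> V1 \<and> h \<in> V2 \<and> h' \<in> V2 \<and>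
      ((g, g') \<in> E1 \<or> (g = g' \<and> (h, h') \<in> E2))}"

definition Kbar_vertices :: "nat \<Rightarrow> nat set" where
  "Kbar_vertices n = {0..<n}"

definition Kbar_edges :: "nat \<Rightarrow> (nat \<times> nat) set" where
  "Kbar_edges n = {}"

end

theory Submission
  imports Defs
begin

text \<open>In \<open>G[\<overline>{K_n}]\<close> the neighbourhood of \<open>(g, h)\<close> is \<open>N(g) \<times> {0..<n}\<close>, so its weight is
the sum of the fibre sums over \<open>N(g)\<close>. For \<open>n = 2k\<close> the labels \<open>1, \<dots>, nm\<close> split into \<open>km\<close>
pairs \<open>{j, nm + 1 - j}\<close>; giving every fibre \<open>k\<close> of these pairs makes all fibre sums equal to
\<open>C = k (nm + 1)\<close>, hence every weight equals \<open>deg(g) C\<close>. In a non-regular graph that is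
biregular with respect to a bipartition, adjacent vertices have different degrees and only two
degrees occur, so this labelling is local distance antimagic with two weights; two is also a
lower bound as soon as there is an edge.\<close>

lemma ex_fibre_balanced_labelling:
  assumes "finite V"
  obtains f :: "'a \<times> nat \<Rightarrow> nat"
  where "bij_betw f (V \<times> {0..<2*k}) {1..2*k*card V}"
    and "\<And>g. g \<in> V \<Longrightarrow> (\<Sum>h<2*k. f (g, h)) = k * (2*k*card V + 1)"
proof -
  define M where "M = k * card V"
  define N where "N = 2 * M"
  obtain \<phi> where \<phi>: "bij_betw \<phi> (V \<times> {0..<k}) {0..<M}"
    using ex_bij_betw_finite_nat[of "V \<times> {0..<k}"] assms
    by (auto simp: M_def card_cartesian_product mult.commute)
  have \<phi>_lt: "\<phi> (g, h) < M" if "g \<in> V" "h < k" for g h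
    using bij_betw_apply[OF \<phi>, of "(g, h)"] that by auto
  define f where "f = (\<lambda>(g, h). if h < k then \<phi> (g, h) + 1 else N - \<phi> (g, h - k))"
  have lower: "bij_betw f (V \<times> {0..<k}) {1..M}"
  proof -
    have "bij_betw (Suc \<circ> \<phi>) (V \<times> {0..<k}) {1..M}"
      by (rule bij_betw_trans[OF \<phi>]) (simp add: atLeastLessThanSuc_atLeastAtMost)
    then show ?thesis
      by (rule bij_betw_cong[THEN iffD1, rotated]) (auto simp: f_def)
  qed
  have upper: "bij_betw f (V \<times> {k..<2*k}) {M+1..N}"
  proof -
    have shift: "bij_betw (\<lambda>(g, h). (g, h - k)) (V \<times> {k..<2*k}) (V \<times> {0..<k})"
      by (rule bij_betw_byWitness[where f' = "\<lambda>(g, h). (g, h + k)"]) auto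
    have reflect: "bij_betw (\<lambda>j. N - j) {0..<M} {M+1..N}"
      by (rule bij_betw_byWitness[where f' = "\<lambda>j. N - j"]) (auto simp: N_def)
    have "bij_betw ((\<lambda>j. N - j) \<circ> \<phi> \<circ> (\<lambda>(g, h). (g, h - k))) (V \<times> {k..<2*k}) {M+1..N}"
      using shift \<phi> reflect by (intro bij_betw_trans)
    then show ?thesis
      by (rule bij_betw_cong[THEN iffD1, rotated]) (auto simp: f_def)
  qed
  have "bij_betw f (V \<times> {0..<k} \<union> V \<times> {k..<2*k}) ({1..M} \<union> {M+1..N})"
    using lower upper by (rule bij_betw_combine) auto
  moreover have "V \<times> {0..<k} \<union> V \<times> {k..<2*k} = V \<times> {0..<2*k}" by auto
  moreover have "{1..M} \<union> {M+1..N} = {1..2*k*card V}" by (auto simp: N_def M_def)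
  ultimately have "bij_betw f (V \<times> {0..<2*k}) {1..2*k*card V}" by simp
  moreover have "(\<Sum>h<2*k. f (g, h)) = k * (2*k*card V + 1)" if "g \<in> V" for g
  proof -
    have "(\<Sum>h<2*k. f (g, h)) = (\<Sum>h<k. f (g, h)) + (\<Sum>h\<in>{0+k..<k+k}. f (g, h))"
      by (simp add: mult_2 lessThan_atLeast0 sum.atLeastLessThan_concat)
    also have "\<dots> = (\<Sum>h<k. f (g, h)) + (\<Sum>h<k. f (g, h + k))"
      by (simp only: sum.atLeastLessThan_shift_bounds lessThan_atLeast0) (simp add: add.commute)
    also have "\<dots> = (\<Sum>h<k. f (g, h) + f (g, h + k))"
      by (rule sum.distrib[symmetric])
    also have "\<dots> = (\<Sum>h<k. N + 1)"
    proof (rule sum.cong)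
      fix h assume "h \<in> {..<k}"
      then have "h < k" by simp
      moreover have "\<phi> (g, h) < M" using \<phi>_lt that \<open>h < k\<close> by simp
      ultimately show "f (g, h) + f (g, h + k) = N + 1" by (simp add: f_def N_def)
    qed simp
    finally show ?thesis by (simp add: N_def M_def)
  qed
  ultimately show ?thesis using that by blast
qed

lemma lex_vertices_Kbar: "lex_vertices V (Kbar_vertices n) = V \<times> {0..<n}"
  by (simp add: lex_vertices_def Kbar_vertices_def)

lemma lex_edges_Kbar_iff:
  "((g, h), (g', h')) \<in> lex_edges V E (Kbar_vertices n) (Kbar_edges n) \<longleftrightarrow>
     g \<in> V \<and> g' \<in> V \<and> h < n \<and> h' < n \<and> (g, g') \<in> E"
  by (auto simp: lex_edges_def Kbar_vertices_def Kbar_edges_def)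

lemma nbhd_lex_Kbar:
  assumes "E \<subseteq> V \<times> V" "g \<in> V" "h < n"
  shows "nbhd (lex_edges V E (Kbar_vertices n) (Kbar_edges n)) (g, h) = nbhd E g \<times> {0..<n}"
  using assms by (auto simp: nbhd_def lex_edges_Kbar_iff)

lemma weight_lex_Kbar:
  assumes "E \<subseteq> V \<times> V" "g \<in> V" "h < n"
    and fibre_sum: "\<And>g'. g' \<in> V \<Longrightarrow> (\<Sum>h'<n. f (g', h')) = C"
  shows "weight (lex_edges V E (Kbar_vertices n) (Kbar_edges n)) f (g, h) = degree E g * C"
proof -
  have "weight (lex_edges V E (Kbar_vertices n) (Kbar_edges n)) f (g, h)
      = (\<Sum>g'\<in>nbhd E g. \<Sum>h'<n. f (g', h'))"
    using assms(1-3)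
    by (simp add: weight_def nbhd_lex_Kbar sum.cartesian_product lessThan_atLeast0)
  also have "\<dots> = (\<Sum>g'\<in>nbhd E g. C)"
    using assms(1,2) fibre_sum by (intro sum.cong) (auto simp: nbhd_def)
  finally show ?thesis by (simp add: degree_def)
qed

lemma ld_antimagic_lex_Kbar:
  assumes "E \<subseteq> V \<times> V"
    and bij: "bij_betw f (V \<times> {0..<n}) {1..card V * n}"
    and fibre_sum: "\<And>g. g \<in> V \<Longrightarrow> (\<Sum>h<n. f (g, h)) = C" and "C > 0"
    and adjacent_degrees: "\<And>u v. (u, v) \<in> E \<Longrightarrow> degree E u \<noteq> degree E v"
  shows "ld_antimagic (lex_vertices V (Kbar_vertices n)) (lex_edges V E (Kbar_vertices n) (Kbar_edges n)) f"
proof -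
  have "weight (lex_edges V E (Kbar_vertices n) (Kbar_edges n)) f (g, h)
      \<noteq> weight (lex_edges V E (Kbar_vertices n) (Kbar_edges n)) f (g', h')"
    if "((g, h), (g', h')) \<in> lex_edges V E (Kbar_vertices n) (Kbar_edges n)" for g h g' h'
  proof -
    have "g \<in> V" "g' \<in> V" "h < n" "h' < n" "(g, g') \<in> E"
      using that by (simp_all add: lex_edges_Kbar_iff)
    then show ?thesis
      using weight_lex_Kbar[OF assms(1) _ _ fibre_sum] adjacent_degrees \<open>C > 0\<close> by simp
  qed
  with bij show ?thesis
    by (auto simp: ld_antimagic_def lex_vertices_Kbar card_cartesian_product)
qed

lemma card_weight_lex_Kbar_le:
  assumes "finite V" "E \<subseteq> V \<times> V"
    and fibre_sum: "\<And>g. g \<in> V \<Longrightarrow> (\<Sum>h<n. f (g, h)) = C"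
  shows "card (weight (lex_edges V E (Kbar_vertices n) (Kbar_edges n)) f ` lex_vertices V (Kbar_vertices n))
      \<le> card (degree E ` V)"
proof -
  have "weight (lex_edges V E (Kbar_vertices n) (Kbar_edges n)) f ` lex_vertices V (Kbar_vertices n)
      \<subseteq> (\<lambda>d. d * C) ` degree E ` V"
    using weight_lex_Kbar[OF assms(2) _ _ fibre_sum] by (auto simp: lex_vertices_Kbar)
  then have "card (weight (lex_edges V E (Kbar_vertices n) (Kbar_edges n)) f ` lex_vertices V (Kbar_vertices n))
      \<le> card ((\<lambda>d. d * C) ` degree E ` V)"
    using assms(1) by (intro card_mono) auto
  also have "\<dots> \<le> card (degree E ` V)"
    using assms(1) by (intro card_image_le) simp
  finally show ?thesis .
qed

lemma card_weight_image_ge_2: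
  assumes "finite V" "(u, v) \<in> E" "u \<in> V" "v \<in> V" "ld_antimagic V E f"
  shows "2 \<le> card (weight E f ` V)"
proof -
  have "weight E f u \<noteq> weight E f v"
    using assms(2,5) by (auto simp: ld_antimagic_def)
  then have "2 = card {weight E f u, weight E f v}" by simp
  also have "\<dots> \<le> card (weight E f ` V)"
    using assms(1,3,4) by (intro card_mono) auto
  finally show ?thesis .
qed

lemma chi_ld_eq_2I:
  assumes "finite V" "(u, v) \<in> E" "u \<in> V" "v \<in> V"
    and "ld_antimagic V E f" "card (weight E f ` V) \<le> 2"
  shows "chi_ld V E = 2"
  unfolding chi_ld_def
proof (rule Least_equality)
  show "\<exists>f. ld_antimagic V E f \<and> 2 = card (weight E f ` V)"
    using assms card_weight_image_ge_2[OF assms(1-5)] by (intro exI[of _ f]) simp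
qed (use card_weight_image_ge_2[OF assms(1-4)] in blast)

lemma card_degree_image_le_2:
  assumes "finite V" "bipartition V E A B"
    and "\<forall>u\<in>A. \<forall>v\<in>A. degree E u = degree E v"
    and "\<forall>u\<in>B. \<forall>v\<in>B. degree E u = degree E v"
  shows "card (degree E ` V) \<le> 2"
proof -
  have V: "V = A \<union> B"
    using assms(2) by (simp add: bipartition_def)
  have "finite A" "finite B"
    using assms(1) V by simp_all
  then have "card (degree E ` A) \<le> Suc 0" "card (degree E ` B) \<le> Suc 0"
    using assms(3,4) by (intro card_le_Suc0_iff_eq[THEN iffD2]; blast)+
  then show ?thesis
    using card_Un_le[of "degree E ` A" "degree E ` B"] V by (simp add: image_Un)
qed

lemma biregular_bipartite_adjacent_degree_neq:
  assumes "bipartition V E A B" "\<not> regular V E"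
    and deg_A: "\<forall>u\<in>A. \<forall>v\<in>A. degree E u = degree E v"
    and deg_B: "\<forall>u\<in>B. \<forall>v\<in>B. degree E u = degree E v"
    and "(u, v) \<in> E"
  shows "degree E u \<noteq> degree E v"
proof
  assume "degree E u = degree E v"
  moreover have "u \<in> A \<and> v \<in> B \<or> u \<in> B \<and> v \<in> A" and V: "V = A \<union> B"
    using assms(1,5) by (auto simp: bipartition_def)
  ultimately obtain a b where "a \<in> A" "b \<in> B" "degree E a = degree E b"
    by metis
  then have "degree E w = degree E a" if "w \<in> V" for w
    using that V deg_A deg_B by (metis UnE)
  then have "regular V E" by (simp add: regular_def)
  with assms(2) show False by simp
qed

theorem mainTheorem17:
  fixes V :: "'a set" and E :: "('a \<times> 'a) set" and A B :: "'a set" and n m :: nat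
  assumes "even n" and "n \<ge> 2" and "m > 1"
    and "simple_graph V E" and "no_isolated V E" and "card V = m"
    and "\<not> regular V E"
    and "bipartition V E A B"
    and "\<forall>u\<in>A. \<forall>v\<in>A. degree E u = degree E v"
    and "\<forall>u\<in>B. \<forall>v\<in>B. degree E u = degree E v"
  shows "chi_ld (lex_vertices V (Kbar_vertices n)) (lex_edges V E (Kbar_vertices n) (Kbar_edges n)) = 2"
proof -
  obtain k where n: "n = 2 * k" using assms(1) by (rule evenE)
  have "finite V" and E_sub: "E \<subseteq> V \<times> V"
    using assms(4) by (auto simp: simple_graph_def)
  obtain f where bij: "bij_betw f (V \<times> {0..<n}) {1..card V * n}"
    and fibre_sum: "\<And>g. g \<in> V \<Longrightarrow> (\<Sum>h<n. f (g, h)) = k * (2 * k * card V + 1)"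
    using ex_fibre_balanced_labelling[OF \<open>finite V\<close>, of k] n by (metis mult.commute)
  have "k > 0" using assms(2) n by simp
  have antimagic: "ld_antimagic (lex_vertices V (Kbar_vertices n))
      (lex_edges V E (Kbar_vertices n) (Kbar_edges n)) f"
    using ld_antimagic_lex_Kbar[OF E_sub bij fibre_sum] \<open>k > 0\<close>
      biregular_bipartite_adjacent_degree_neq[OF assms(8,7,9,10)] by simp
  have "card (weight (lex_edges V E (Kbar_vertices n) (Kbar_edges n)) f
      ` lex_vertices V (Kbar_vertices n)) \<le> 2"
    using card_weight_lex_Kbar_le[OF \<open>finite V\<close> E_sub fibre_sum]
      card_degree_image_le_2[OF \<open>finite V\<close> assms(8-10)] by linarith
  moreover obtain g g' where "g \<in> V" "(g, g') \<in> E"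
    using assms(3,5,6) by (fastforce simp: no_isolated_def nbhd_def)
  ultimately show ?thesis
    using E_sub assms(2) \<open>finite V\<close> antimagic
    by (intro chi_ld_eq_2I[where u = "(g, 0)" and v = "(g', 0)"])
       (auto simp: lex_edges_Kbar_iff lex_vertices_Kbar)
qed

end
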